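(* Let $n\ge 3$ and $a,c>0$. Let $\Gamma'$ be the wheel on $n+1$ vertices: vertices $1,\dots,n$ form a cycle ($i$ joined to $i+1$, indices modulo $n$) with all conductances $c$, and vertex $n+1$ is joined to every vertex $1,\dots,n$ with conductance $a$. Put $q=\frac{a}{2c}+1$. Then $$K(\Gamma')=-\frac{1}{2c}\,\frac{n+1}{T_n(q)-1}\left[\left(\frac{an}{6c}-n+1\right)U_{n-1}(q)+\left(\frac{2c}{a}+\frac{n}{3}\right)\bigl(V_{n-1}(q)-1\bigr)\right]+\frac{1}{a}+\frac{n(n+1)}{6c}.$$
   Context: For a network with vertex set $\{1,\dots,N\}$ and conductances $c_{ij}>0$ on its edges, the Laplacian is the matrix $L$ with $L_{ii}=\sum_k c_{ik}$, $L_{ij}=-c_{ij}$ ($i\neq j$, $c_{ij}=0$ for non-edges). With $G'$ the group inverse of the Laplacian of $\Gamma'$, the effective resistance is $R(i,j)=G'_{ii}+G'_{jj}-2G'_{ij}$ and the Kirchhoff index is $K(\Gamma')=\frac12\sum_{i,j}R(i,j)$. $T_k,U_k$ are the Chebyshev polynomials of the first and second kind ($T_0=1,T_1=x,U_0=1,U_1=2x$, recurrence $p_{k+1}=2xp_k-p_{k-1}$) and $V_k$ those of the third kind ($V_0=1$, $V_1=2x-1$, $V_{k+1}=2xV_k-V_{k-1}$). *)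

theory Defs
  imports Complex_Main
begin

fun cheb_T :: "nat \<Rightarrow> real \<Rightarrow> real" where
  "cheb_T 0 x = 1"
| "cheb_T (Suc 0) x = x"
| "cheb_T (Suc (Suc k)) x = 2 * x * cheb_T (Suc k) x - cheb_T k x"

fun cheb_U :: "nat \<Rightarrow> real \<Rightarrow> real" where
  "cheb_U 0 x = 1"
| "cheb_U (Suc 0) x = 2 * x"
| "cheb_U (Suc (Suc k)) x = 2 * x * cheb_U (Suc k) x - cheb_U k x"

fun cheb_V :: "nat \<Rightarrow> real \<Rightarrow> real" where
  "cheb_V 0 x = 1"
| "cheb_V (Suc 0) x = 2 * x - 1"
| "cheb_V (Suc (Suc k)) x = 2 * x * cheb_V (Suc k) x - cheb_V k x"

text \<open>Networks on the vertex set {1..N}: conductance function cnd (cnd i j = 0 for non-edges).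
  Matrices indexed by {1..N} are represented as functions nat => nat => real.\<close>

definition laplacian :: "nat \<Rightarrow> (nat \<Rightarrow> nat \<Rightarrow> real) \<Rightarrow> nat \<Rightarrow> nat \<Rightarrow> real" where
  "laplacian N cnd i j = (if i = j then (\<Sum>k\<in>{1..N}. cnd i k) else - cnd i j)"

definition matmul :: "nat \<Rightarrow> (nat \<Rightarrow> nat \<Rightarrow> real) \<Rightarrow> (nat \<Rightarrow> nat \<Rightarrow> real) \<Rightarrow> nat \<Rightarrow> nat \<Rightarrow> real" where
  "matmul N A B i j = (\<Sum>k\<in>{1..N}. A i k * B k j)"

definition is_group_inverse :: "nat \<Rightarrow> (nat \<Rightarrow> nat \<Rightarrow> real) \<Rightarrow> (nat \<Rightarrow> nat \<Rightarrow> real) \<Rightarrow> bool" where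
  "is_group_inverse N L G \<longleftrightarrow>
     (\<forall>i\<in>{1..N}. \<forall>j\<in>{1..N}.
        matmul N (matmul N L G) L i j = L i j \<and>
        matmul N (matmul N G L) G i j = G i j \<and>
        matmul N L G i j = matmul N G L i j) \<and>
     (\<forall>i j. (i \<notin> {1..N} \<or> j \<notin> {1..N}) \<longrightarrow> G i j = 0)"

definition group_inverse :: "nat \<Rightarrow> (nat \<Rightarrow> nat \<Rightarrow> real) \<Rightarrow> nat \<Rightarrow> nat \<Rightarrow> real" where
  "group_inverse N L = (THE G. is_group_inverse N L G)"

definition eff_resistance :: "nat \<Rightarrow> (nat \<Rightarrow> nat \<Rightarrow> real) \<Rightarrow> nat \<Rightarrow> nat \<Rightarrow> real" where
  "eff_resistance N cnd i j =
     (let G = group_inverse N (laplacian N cnd) in G i i + G j j - 2 * G i j)"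

definition kirchhoff_index :: "nat \<Rightarrow> (nat \<Rightarrow> nat \<Rightarrow> real) \<Rightarrow> real" where
  "kirchhoff_index N cnd = (1/2) * (\<Sum>i\<in>{1..N}. \<Sum>j\<in>{1..N}. eff_resistance N cnd i j)"

definition wheel_cond :: "nat \<Rightarrow> real \<Rightarrow> real \<Rightarrow> nat \<Rightarrow> nat \<Rightarrow> real" where
  "wheel_cond n a c i j =
     (if i \<in> {1..n} \<and> j \<in> {1..n} \<and> (j = i mod n + 1 \<or> i = j mod n + 1) then c
      else if (i = n + 1 \<and> j \<in> {1..n}) \<or> (j = n + 1 \<and> i \<in> {1..n}) then a
      else 0)"

end

theory Submission
  imports Defs
begin

text \<open>Let N = n + 1. A symmetric G with zero column sums and L G = I - J/N is the group inverse
  of the Laplacian L, and for such G the effective resistances add up to K = N tr G. On the rim,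
  G is an affine function of f(d) = U_{d-1}(q) + U_{n-d-1}(q), d the distance of the two rim
  vertices: f satisfies 2q f(d) = f(d-1) + f(d+1) for 0 < d < n, the rim equations of L G = I - J/N
  up to a constant, while at d = 0 the defect is 2(T_n(q) - 1) because U_n - U_{n-2} = 2 T_n.
  The hub entries are constants fixed by the zero column sums. Finally tr G involves only
  f(0) = U_{n-1}(q), and the V-term of the closed form enters through T_n - V_{n-1} = (q-1) U_{n-1}.\<close>

lemma cheb_T_ge_1_strict_mono:
  assumes "q > 1"
  shows "1 \<le> cheb_T k q \<and> cheb_T k q < cheb_T (Suc k) q"
proof (induction k)
  case 0 then show ?case using assms by simp
next
  case (Suc k)
  have "cheb_T (Suc (Suc k)) q - cheb_T (Suc k) q
        = 2 * (q - 1) * cheb_T (Suc k) q + (cheb_T (Suc k) q - cheb_T k q)"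
    by (simp add: algebra_simps)
  moreover have "2 * (q - 1) * cheb_T (Suc k) q > 0" using Suc assms by simp
  ultimately show ?case using Suc by linarith
qed

lemma cheb_T_gt_1: "q > 1 \<Longrightarrow> 0 < k \<Longrightarrow> cheb_T k q > 1"
  using cheb_T_ge_1_strict_mono[of q "k - 1"] by (cases k) auto

lemma cheb_T_Suc_minus_cheb_V: "cheb_T (Suc m) q - cheb_V m q = (q - 1) * cheb_U m q"
proof (induction m q rule: cheb_U.induct)
  case (3 k x)
  have "cheb_T (Suc (Suc (Suc k))) x - cheb_V (Suc (Suc k)) x
     = 2 * x * (cheb_T (Suc (Suc k)) x - cheb_V (Suc k) x) - (cheb_T (Suc k) x - cheb_V k x)"
    by (simp add: algebra_simps)
  also have "\<dots> = (x - 1) * cheb_U (Suc (Suc k)) x" unfolding 3 by (simp add: algebra_simps)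
  finally show ?case .
qed (simp_all add: algebra_simps)

text \<open>U_{k-1}(q), with U_{-1} = 0, so that the three-term recurrence holds from k = 0 on.\<close>

definition cheb_U_pred :: "real \<Rightarrow> nat \<Rightarrow> real" where
  "cheb_U_pred q k = (if k = 0 then 0 else cheb_U (k - 1) q)"

lemma cheb_U_pred_0 [simp]: "cheb_U_pred q 0 = 0"
  and cheb_U_pred_1 [simp]: "cheb_U_pred q (Suc 0) = 1"
  by (simp_all add: cheb_U_pred_def)

lemma cheb_U_pred_Suc_Suc: "cheb_U_pred q (Suc (Suc m)) = 2 * q * cheb_U_pred q (Suc m) - cheb_U_pred q m"
  by (cases m) (simp_all add: cheb_U_pred_def)

lemma cheb_U_pred_rec: "1 \<le> k \<Longrightarrow> cheb_U_pred q (k + 1) = 2 * q * cheb_U_pred q k - cheb_U_pred q (k - 1)"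
  using cheb_U_pred_Suc_Suc[of q "k - 1"] by (simp add: Suc_diff_le)

lemma cheb_U_pred_Suc_Suc_diff: "cheb_U_pred q (Suc (Suc m)) - cheb_U_pred q m = 2 * cheb_T (Suc m) q"
proof (induction m q rule: cheb_U.induct)
  case (3 k x)
  have "cheb_U_pred x (Suc (Suc (Suc (Suc k)))) - cheb_U_pred x (Suc (Suc k))
    = 2 * x * (cheb_U_pred x (Suc (Suc (Suc k))) - cheb_U_pred x (Suc k))
      - (cheb_U_pred x (Suc (Suc k)) - cheb_U_pred x k)"
    by (simp only: cheb_U_pred_Suc_Suc) (simp add: algebra_simps)
  also have "\<dots> = 2 * cheb_T (Suc (Suc (Suc k))) x" unfolding 3 by (simp add: algebra_simps)
  finally show ?case .
qed (simp_all add: cheb_U_pred_def)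

lemma matmul_assoc: "matmul N (matmul N A B) C i j = matmul N A (matmul N B C) i j"
  unfolding matmul_def
  by (simp add: sum_distrib_left sum_distrib_right mult.assoc) (rule sum.swap)

definition mat_eq_on :: "nat \<Rightarrow> (nat \<Rightarrow> nat \<Rightarrow> real) \<Rightarrow> (nat \<Rightarrow> nat \<Rightarrow> real) \<Rightarrow> bool" where
  "mat_eq_on N A B \<longleftrightarrow> (\<forall>i\<in>{1..N}. \<forall>j\<in>{1..N}. A i j = B i j)"

lemma mat_eq_on_refl: "mat_eq_on N A A"
  and mat_eq_on_sym: "mat_eq_on N A B \<Longrightarrow> mat_eq_on N B A"
  and mat_eq_on_trans [trans]: "mat_eq_on N A B \<Longrightarrow> mat_eq_on N B C \<Longrightarrow> mat_eq_on N A C"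
  by (auto simp: mat_eq_on_def)

lemma mat_eq_on_matmul:
  "mat_eq_on N A A' \<Longrightarrow> mat_eq_on N B B' \<Longrightarrow> mat_eq_on N (matmul N A B) (matmul N A' B')"
  unfolding mat_eq_on_def matmul_def by (auto intro!: sum.cong)

lemma mat_eq_on_matmul_assoc: "mat_eq_on N (matmul N (matmul N A B) C) (matmul N A (matmul N B C))"
  by (simp add: mat_eq_on_def matmul_assoc)

lemma is_group_inverse_unique:
  assumes X: "is_group_inverse N L X" and Y: "is_group_inverse N L Y"
  shows "X = Y"
proof -
  let ?m = "matmul N"
  note assoc = mat_eq_on_matmul_assoc and cong = mat_eq_on_matmul
  have X1: "mat_eq_on N (?m (?m L X) L) L" and X2: "mat_eq_on N (?m (?m X L) X) X"
    and X3: "mat_eq_on N (?m L X) (?m X L)"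
    using X by (auto simp: is_group_inverse_def mat_eq_on_def)
  have Y1: "mat_eq_on N (?m (?m L Y) L) L" and Y2: "mat_eq_on N (?m (?m Y L) Y) Y"
    and Y3: "mat_eq_on N (?m L Y) (?m Y L)"
    using Y by (auto simp: is_group_inverse_def mat_eq_on_def)
  have LX: "mat_eq_on N (?m L X) (?m Y L)"
  proof -
    have "mat_eq_on N (?m L X) (?m (?m (?m L Y) L) X)"
      by (rule cong[OF mat_eq_on_sym[OF Y1] mat_eq_on_refl])
    also have "mat_eq_on N \<dots> (?m (?m L Y) (?m L X))" by (rule assoc)
    also have "mat_eq_on N \<dots> (?m (?m Y L) (?m X L))" by (rule cong[OF Y3 X3])
    also have "mat_eq_on N \<dots> (?m Y (?m L (?m X L)))" by (rule assoc)
    also have "mat_eq_on N \<dots> (?m Y (?m (?m L X) L))"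
      by (rule cong[OF mat_eq_on_refl mat_eq_on_sym[OF assoc]])
    also have "mat_eq_on N \<dots> (?m Y L)" by (rule cong[OF mat_eq_on_refl X1])
    finally show ?thesis .
  qed
  have "mat_eq_on N X Y"
  proof -
    have "mat_eq_on N X (?m (?m X L) X)" by (rule mat_eq_on_sym[OF X2])
    also have "mat_eq_on N \<dots> (?m X (?m L X))" by (rule assoc)
    also have "mat_eq_on N \<dots> (?m X (?m L Y))"
      by (rule cong[OF mat_eq_on_refl mat_eq_on_trans[OF LX mat_eq_on_sym[OF Y3]]])
    also have "mat_eq_on N \<dots> (?m (?m X L) Y)" by (rule mat_eq_on_sym[OF assoc])
    also have "mat_eq_on N \<dots> (?m (?m Y L) Y)"
      by (rule cong[OF mat_eq_on_trans[OF mat_eq_on_sym[OF X3] LX] mat_eq_on_refl])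
    also have "mat_eq_on N \<dots> Y" by (rule Y2)
    finally show ?thesis .
  qed
  moreover have "\<forall>i j. (i \<notin> {1..N} \<or> j \<notin> {1..N}) \<longrightarrow> X i j = 0 \<and> Y i j = 0"
    using X Y by (auto simp: is_group_inverse_def)
  ultimately show ?thesis unfolding mat_eq_on_def by (metis ext)
qed

lemma group_inverse_eqI: "is_group_inverse N L G \<Longrightarrow> group_inverse N L = G"
  unfolding group_inverse_def by (blast intro: is_group_inverse_unique)

definition centering :: "nat \<Rightarrow> nat \<Rightarrow> nat \<Rightarrow> real" where
  "centering N i j = (if i = j then 1 else 0) - 1 / real N"

lemma sum_centering_mult:
  assumes "i \<in> {1..N}"
  shows "(\<Sum>k\<in>{1..N}. centering N i k * X k) = X i - (\<Sum>k\<in>{1..N}. X k) / real N"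
proof -
  have "(\<Sum>k\<in>{1..N}. centering N i k * X k) = (\<Sum>k\<in>{1..N}. (if i = k then X k else 0) - X k / real N)"
    by (rule sum.cong) (auto simp: centering_def left_diff_distrib)
  also have "\<dots> = X i - (\<Sum>k\<in>{1..N}. X k) / real N"
    using assms by (simp add: sum_subtractf sum.delta sum_divide_distrib)
  finally show ?thesis .
qed

text \<open>By symmetry G L = (L G)^T, and I - J/N fixes every column with zero sum.\<close>

lemma is_group_inverse_if_centering:
  assumes L_sym: "\<And>i j. L i j = L j i" and G_sym: "\<And>i j. G i j = G j i"
    and L_col: "\<And>j. j \<in> {1..N} \<Longrightarrow> (\<Sum>k\<in>{1..N}. L k j) = 0"
    and G_col: "\<And>j. j \<in> {1..N} \<Longrightarrow> (\<Sum>k\<in>{1..N}. G k j) = 0"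
    and LG: "\<And>i j. i \<in> {1..N} \<Longrightarrow> j \<in> {1..N} \<Longrightarrow> matmul N L G i j = centering N i j"
    and G_out: "\<And>i j. i \<notin> {1..N} \<or> j \<notin> {1..N} \<Longrightarrow> G i j = 0"
  shows "is_group_inverse N L G"
proof -
  have GL: "matmul N G L i j = centering N i j" if "i \<in> {1..N}" "j \<in> {1..N}" for i j
  proof -
    have "matmul N G L i j = matmul N L G j i"
      unfolding matmul_def by (intro sum.cong refl) (metis G_sym L_sym mult.commute)
    then show ?thesis using LG[OF that(2,1)] by (simp add: centering_def)
  qed
  have centering_fixes: "matmul N M X i j = X i j"
    if "\<And>i j. i \<in> {1..N} \<Longrightarrow> j \<in> {1..N} \<Longrightarrow> M i j = centering N i j"
      and "(\<Sum>k\<in>{1..N}. X k j) = 0" and "i \<in> {1..N}" for M X i j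
  proof -
    have "matmul N M X i j = (\<Sum>k\<in>{1..N}. centering N i k * X k j)"
      unfolding matmul_def using that(1,3) by (intro sum.cong) auto
    then show ?thesis using sum_centering_mult[OF that(3), of "\<lambda>k. X k j"] that(2) by simp
  qed
  show ?thesis
    unfolding is_group_inverse_def
    using centering_fixes[of "matmul N L G" L] centering_fixes[of "matmul N G L" G]
      LG GL L_col G_col G_out
    by auto
qed

lemma laplacian_mult_row:
  assumes "i \<in> {1..N}" "cnd i i = 0"
  shows "(\<Sum>k\<in>{1..N}. laplacian N cnd i k * X k)
       = (\<Sum>k\<in>{1..N}. cnd i k) * X i - (\<Sum>k\<in>{1..N}. cnd i k * X k)"
proof -
  have "(\<Sum>k\<in>{1..N}. laplacian N cnd i k * X k)
      = (\<Sum>k\<in>{1..N}. (if i = k then (\<Sum>m\<in>{1..N}. cnd i m) * X k else 0) - cnd i k * X k)"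
    by (rule sum.cong) (auto simp: laplacian_def assms)
  also have "\<dots> = (\<Sum>k\<in>{1..N}. cnd i k) * X i - (\<Sum>k\<in>{1..N}. cnd i k * X k)"
    using assms(1) by (simp add: sum_subtractf sum.delta)
  finally show ?thesis .
qed

lemma laplacian_sym: "(\<And>i j. cnd i j = cnd j i) \<Longrightarrow> laplacian N cnd i j = laplacian N cnd j i"
  by (simp add: laplacian_def)

lemma laplacian_col_sum:
  assumes "\<And>i j. cnd i j = cnd j i" "cnd j j = 0" "j \<in> {1..N}"
  shows "(\<Sum>k\<in>{1..N}. laplacian N cnd k j) = 0"
proof -
  have "(\<Sum>k\<in>{1..N}. laplacian N cnd k j) = (\<Sum>k\<in>{1..N}. laplacian N cnd j k * 1)"
    using laplacian_sym[of cnd, OF assms(1)] by simp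
  then show ?thesis
    using laplacian_mult_row[of j N cnd "\<lambda>_. 1", OF assms(3,2)] by simp
qed

lemma kirchhoff_index_eq_trace:
  assumes G: "group_inverse N (laplacian N cnd) = G"
    and G_col: "\<And>j. j \<in> {1..N} \<Longrightarrow> (\<Sum>i\<in>{1..N}. G i j) = 0"
  shows "kirchhoff_index N cnd = real N * (\<Sum>i\<in>{1..N}. G i i)"
proof -
  have "(\<Sum>i\<in>{1..N}. \<Sum>j\<in>{1..N}. G i j) = 0"
    by (subst sum.swap) (intro sum.neutral ballI G_col)
  then show ?thesis
    by (simp add: kirchhoff_index_def eff_resistance_def G sum.distrib sum_subtractf
        sum_distrib_left[symmetric])
qed

locale wheel_network =
  fixes n :: nat and a c q :: real
  assumes n_ge_3: "n \<ge> 3" and a_pos: "a > 0" and c_pos: "c > 0"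
    and q_def: "q = a / (2 * c) + 1"
begin

abbreviation "w \<equiv> wheel_cond n a c"
abbreviation "L \<equiv> laplacian (n + 1) w"

definition "rim_succ i = (if i = n then 1 else Suc i)"
definition "rim_pred i = (if i = 1 then n else i - 1)"
text \<open>Index distance rather than cyclic distance: profile (n - d) = profile d.\<close>

definition "idx_dist i j = (if j \<le> i then i - j else j - (i::nat))"
definition "profile d = cheb_U_pred q d + cheb_U_pred q (n - d)"

text \<open>The number of vertices as a real; rewriting real n to N - 1 leaves field arithmetic a
  single atom to clear from denominators.\<close>

definition "N = real n + 1"
definition "rim_scale = 1 / (2 * c * (cheb_T n q - 1))"
definition "rim_shift = - (N + 1) / (a * N^2)"
definition "hub_rim = - 1 / (a * N^2)"
definition "hub_hub = (N - 1) / (a * N^2)"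

definition "green i j =
  (if i \<in> {1..n} \<and> j \<in> {1..n} then rim_scale * profile (idx_dist i j) + rim_shift
   else if (i \<in> {1..n} \<and> j = n + 1) \<or> (i = n + 1 \<and> j \<in> {1..n}) then hub_rim
   else if i = n + 1 \<and> j = n + 1 then hub_hub else 0)"

lemma q_gt_1: "q > 1"
  using a_pos c_pos q_def by simp

lemma real_n_eq: "real n = N - 1" and N_pos: "N > 0"
  by (simp_all add: N_def)

lemma cheb_T_n_gt_1: "cheb_T n q > 1"
  using cheb_T_gt_1[OF q_gt_1] n_ge_3 by simp

lemma rim_succ_in: "i \<in> {1..n} \<Longrightarrow> rim_succ i \<in> {1..n}"
  and rim_pred_in: "i \<in> {1..n} \<Longrightarrow> rim_pred i \<in> {1..n}"
  and rim_succ_neq_pred: "i \<in> {1..n} \<Longrightarrow> rim_succ i \<noteq> rim_pred i"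
  using n_ge_3 by (auto simp: rim_succ_def rim_pred_def)

lemma bij_betw_rim_succ: "bij_betw rim_succ {1..n} {1..n}"
  by (rule bij_betw_byWitness[where f' = rim_pred]) (use n_ge_3 in \<open>auto simp: rim_succ_def rim_pred_def\<close>)

lemma bij_betw_rim_pred: "bij_betw rim_pred {1..n} {1..n}"
  by (rule bij_betw_byWitness[where f' = rim_succ]) (use n_ge_3 in \<open>auto simp: rim_succ_def rim_pred_def\<close>)

lemma wheel_cond_sym: "w i j = w j i"
  by (auto simp: wheel_cond_def)

lemma wheel_cond_diag: "w i i = 0"
proof -
  have "i \<in> {1..n} \<Longrightarrow> i \<noteq> i mod n + 1" using n_ge_3 by (cases "i = n") auto
  then show ?thesis by (auto simp: wheel_cond_def)
qed

lemma wheel_cond_rim: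
  assumes i: "i \<in> {1..n}" and k: "k \<in> {1..n+1}"
  shows "w i k = (if k = rim_succ i \<or> k = rim_pred i then c else if k = n + 1 then a else 0)"
proof -
  have "i mod n + 1 = rim_succ i" using i by (auto simp: rim_succ_def)
  moreover have "k \<in> {1..n} \<Longrightarrow> (i = k mod n + 1) = (k = rim_pred i)" using i n_ge_3
    by (cases "k = n") (auto simp: rim_pred_def)
  ultimately show ?thesis using i k rim_succ_in[OF i] rim_pred_in[OF i]
    by (auto simp: wheel_cond_def)
qed

lemma sum_wheel_cond_rim:
  assumes i: "i \<in> {1..n}"
  shows "(\<Sum>k\<in>{1..n+1}. w i k * \<phi> k) = c * \<phi> (rim_succ i) + c * \<phi> (rim_pred i) + a * \<phi> (n + 1)"
proof -
  have "(\<Sum>k\<in>{1..n+1}. w i k * \<phi> k) = (\<Sum>k\<in>{1..n+1}.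
      (if k = rim_succ i then c * \<phi> k else 0) + (if k = rim_pred i then c * \<phi> k else 0)
      + (if k = n + 1 then a * \<phi> k else 0))"
    using rim_succ_neq_pred[OF i] rim_succ_in[OF i] rim_pred_in[OF i]
    by (intro sum.cong) (auto simp: wheel_cond_rim[OF i])
  also have "\<dots> = c * \<phi> (rim_succ i) + c * \<phi> (rim_pred i) + a * \<phi> (n + 1)"
    using rim_succ_in[OF i] rim_pred_in[OF i] by (simp add: sum.distrib sum.delta)
  finally show ?thesis .
qed

lemma sum_wheel_cond_hub: "(\<Sum>k\<in>{1..n+1}. w (n+1) k * \<phi> k) = a * (\<Sum>k\<in>{1..n}. \<phi> k)"
proof -
  have "(\<Sum>k\<in>{1..n+1}. w (n+1) k * \<phi> k) = (\<Sum>k\<in>{1..n}. a * \<phi> k)"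
    by (simp add: sum.cl_ivl_Suc wheel_cond_def)
  then show ?thesis by (simp add: sum_distrib_left)
qed

lemma profile_rec:
  assumes "1 \<le> d" "d \<le> n - 1"
  shows "2 * q * profile d - profile (d + 1) - profile (d - 1) = 0"
proof -
  have "cheb_U_pred q (d + 1) = 2 * q * cheb_U_pred q d - cheb_U_pred q (d - 1)"
    and "cheb_U_pred q (n - d + 1) = 2 * q * cheb_U_pred q (n - d) - cheb_U_pred q (n - d - 1)"
    using assms by (intro cheb_U_pred_rec; simp)+
  moreover have "n - (d + 1) = n - d - 1" "n - (d - 1) = n - d + 1" using assms by auto
  ultimately show ?thesis unfolding profile_def by (simp add: algebra_simps)
qed

lemma profile_0: "2 * q * profile 0 - 2 * profile 1 = 2 * (cheb_T n q - 1)"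
proof -
  have "cheb_U_pred q (n + 1) = 2 * q * cheb_U_pred q n - cheb_U_pred q (n - 1)"
    using n_ge_3 by (intro cheb_U_pred_rec) simp
  moreover have "cheb_U_pred q (Suc (Suc (n - 1))) - cheb_U_pred q (n - 1) = 2 * cheb_T (Suc (n - 1)) q"
    by (rule cheb_U_pred_Suc_Suc_diff)
  moreover have "Suc (Suc (n - 1)) = n + 1" "Suc (n - 1) = n" using n_ge_3 by auto
  ultimately show ?thesis unfolding profile_def by simp
qed

lemma profile_sym: "d \<le> n \<Longrightarrow> profile (n - d) = profile d"
  by (simp add: profile_def)

lemma profile_cycle:
  assumes i: "i \<in> {1..n}" and j: "j \<in> {1..n}"
  shows "2 * q * profile (idx_dist i j) - profile (idx_dist (rim_succ i) j)
           - profile (idx_dist (rim_pred i) j) = (if i = j then 2 * (cheb_T n q - 1) else 0)"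
proof -
  have profile_n_1: "profile (n - 1) = profile 1" using profile_sym[of 1] n_ge_3 by simp
  consider "i = j" | "j < i" | "i < j" by arith
  then show ?thesis
  proof cases
    case 1
    then have "idx_dist i j = 0" "profile (idx_dist (rim_succ i) j) = profile 1"
      "profile (idx_dist (rim_pred i) j) = profile 1"
      using i profile_n_1 by (auto simp: idx_dist_def rim_succ_def rim_pred_def)
    then show ?thesis using profile_0 1 by simp
  next
    case 2
    define d where "d = i - j"
    have d: "1 \<le> d" "d \<le> n - 1" using 2 i j by (auto simp: d_def)
    have "profile (idx_dist (rim_succ i) j) = profile (d + 1)"
    proof (cases "i = n")
      case True
      then have "idx_dist (rim_succ i) j = n - (d + 1)" using 2 j by (auto simp: idx_dist_def rim_succ_def d_def)
      then show ?thesis using profile_sym[of "d + 1"] d by simp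
    next
      case False
      then have "idx_dist (rim_succ i) j = d + 1" using 2 by (auto simp: idx_dist_def rim_succ_def d_def)
      then show ?thesis by simp
    qed
    moreover have "profile (idx_dist (rim_pred i) j) = profile (d - 1)"
      using 2 i j by (auto simp: idx_dist_def rim_pred_def d_def)
    ultimately show ?thesis using profile_rec[OF d] 2 by (simp add: idx_dist_def d_def)
  next
    case 3
    define d where "d = j - i"
    have d: "1 \<le> d" "d \<le> n - 1" using 3 i j by (auto simp: d_def)
    have "profile (idx_dist (rim_pred i) j) = profile (d + 1)"
    proof (cases "i = 1")
      case True
      then have "idx_dist (rim_pred i) j = n - (d + 1)" using 3 j by (auto simp: idx_dist_def rim_pred_def d_def)
      then show ?thesis using profile_sym[of "d + 1"] d by simp
    next
      case False
      then have "idx_dist (rim_pred i) j = d + 1" using 3 i by (auto simp: idx_dist_def rim_pred_def d_def)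
      then show ?thesis by simp
    qed
    moreover have "profile (idx_dist (rim_succ i) j) = profile (d - 1)"
      using 3 i j by (auto simp: idx_dist_def rim_succ_def d_def)
    ultimately show ?thesis using profile_rec[OF d] 3 by (simp add: idx_dist_def d_def)
  qed
qed

lemma green_rim: "i \<in> {1..n} \<Longrightarrow> j \<in> {1..n} \<Longrightarrow> green i j = rim_scale * profile (idx_dist i j) + rim_shift"
  by (simp add: green_def)

lemma idx_dist_commute: "idx_dist i j = idx_dist j i"
  by (simp add: idx_dist_def)

lemma green_sym: "green i j = green j i"
  unfolding green_def by (simp add: idx_dist_commute conj_commute)

lemma green_outside: "i \<notin> {1..n+1} \<or> j \<notin> {1..n+1} \<Longrightarrow> green i j = 0"
  by (auto simp: green_def)

lemma laplacian_green_rim_rim: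
  assumes i: "i \<in> {1..n}" and j: "j \<in> {1..n}"
  shows "(2 * c + a) * green i j - c * green (rim_succ i) j - c * green (rim_pred i) j - a * hub_rim
       = centering (n + 1) i j"
proof -
  have split: "(2 * c + a) * (s * x + k) - c * (s * y + k) - c * (s * z + k) - a * h
      = s * c * (2 * q * x - y - z) + a * (k - h)" for s x y z k h
    using c_pos by (simp add: q_def field_simps)
  have "(2 * c + a) * green i j - c * green (rim_succ i) j - c * green (rim_pred i) j - a * hub_rim
     = rim_scale * c * (2 * q * profile (idx_dist i j) - profile (idx_dist (rim_succ i) j)
         - profile (idx_dist (rim_pred i) j)) + a * (rim_shift - hub_rim)"
    unfolding green_rim[OF i j] green_rim[OF rim_succ_in[OF i] j] green_rim[OF rim_pred_in[OF i] j]
    by (rule split)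
  also have "\<dots> = centering (n + 1) i j"
  proof -
    have "rim_scale * c * (2 * (cheb_T n q - 1)) = 1"
      using cheb_T_n_gt_1 c_pos by (simp add: rim_scale_def)
    moreover have "a * (rim_shift - hub_rim) = - 1 / real (n + 1)"
      using a_pos N_pos by (simp add: rim_shift_def hub_rim_def real_n_eq field_simps power2_eq_square)
    ultimately show ?thesis by (simp add: profile_cycle[OF i j] centering_def)
  qed
  finally show ?thesis .
qed

lemma green_rim_col_sum:
  assumes j: "j \<in> {1..n}"
  shows "(\<Sum>k\<in>{1..n}. green k j) = - hub_rim"
proof -
  have "(\<Sum>k\<in>{1..n}. green (rim_succ k) j) = (\<Sum>k\<in>{1..n}. green k j)"
    and "(\<Sum>k\<in>{1..n}. green (rim_pred k) j) = (\<Sum>k\<in>{1..n}. green k j)"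
    using sum.reindex_bij_betw[OF bij_betw_rim_succ, of "\<lambda>k. green k j"]
      sum.reindex_bij_betw[OF bij_betw_rim_pred, of "\<lambda>k. green k j"] by simp_all
  then have "a * (\<Sum>k\<in>{1..n}. green k j) - real n * (a * hub_rim)
      = (2 * c + a) * (\<Sum>k\<in>{1..n}. green k j) - c * (\<Sum>k\<in>{1..n}. green (rim_succ k) j)
        - c * (\<Sum>k\<in>{1..n}. green (rim_pred k) j) - real n * (a * hub_rim)"
    by (simp add: algebra_simps)
  also have "\<dots> = (\<Sum>k\<in>{1..n}. (2 * c + a) * green k j - c * green (rim_succ k) j
        - c * green (rim_pred k) j - a * hub_rim)"
    by (simp add: sum_subtractf sum_distrib_left)
  also have "\<dots> = (\<Sum>k\<in>{1..n}. centering (n + 1) k j)"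
    using j by (intro sum.cong refl laplacian_green_rim_rim) auto
  also have "\<dots> = 1 - real n / real (n + 1)"
    using j by (simp add: centering_def sum_subtractf)
  finally have "a * (\<Sum>k\<in>{1..n}. green k j) = 1 - real n / real (n + 1) + real n * (a * hub_rim)"
    by simp
  also have "\<dots> = 1 / N^2"
    using a_pos N_pos by (simp add: hub_rim_def real_n_eq field_simps power2_eq_square)
  finally show ?thesis
    using a_pos N_pos by (simp add: hub_rim_def field_simps)
qed

lemma green_col_sum:
  assumes j: "j \<in> {1..n+1}"
  shows "(\<Sum>k\<in>{1..n+1}. green k j) = 0"
proof (cases "j = n + 1")
  case True
  then have "(\<Sum>k\<in>{1..n}. green k j) = real n * hub_rim" by (simp add: green_def)
  then show ?thesis
    using True a_pos N_pos
    by (simp add: sum.cl_ivl_Suc green_def hub_rim_def hub_hub_def real_n_eq field_simps)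
next
  case False
  then have "j \<in> {1..n}" using j by auto
  then show ?thesis using green_rim_col_sum by (simp add: sum.cl_ivl_Suc green_def)
qed

lemma laplacian_mult_rim:
  assumes i: "i \<in> {1..n}"
  shows "matmul (n+1) L X i j
       = (2 * c + a) * X i j - c * X (rim_succ i) j - c * X (rim_pred i) j - a * X (n+1) j"
proof -
  have "matmul (n+1) L X i j = (\<Sum>k\<in>{1..n+1}. w i k) * X i j - (\<Sum>k\<in>{1..n+1}. w i k * X k j)"
    unfolding matmul_def using i by (intro laplacian_mult_row wheel_cond_diag) auto
  also have "(\<Sum>k\<in>{1..n+1}. w i k) = 2 * c + a"
    using sum_wheel_cond_rim[OF i, of "\<lambda>_. 1"] by simp
  finally show ?thesis unfolding sum_wheel_cond_rim[OF i] by (simp add: algebra_simps)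
qed

lemma laplacian_mult_hub:
  "matmul (n+1) L X (n+1) j = real n * a * X (n+1) j - a * (\<Sum>k\<in>{1..n}. X k j)"
proof -
  have "matmul (n+1) L X (n+1) j
      = (\<Sum>k\<in>{1..n+1}. w (n+1) k) * X (n+1) j - (\<Sum>k\<in>{1..n+1}. w (n+1) k * X k j)"
    unfolding matmul_def by (intro laplacian_mult_row wheel_cond_diag) auto
  also have "(\<Sum>k\<in>{1..n+1}. w (n+1) k) = real n * a"
    using sum_wheel_cond_hub[of "\<lambda>_. 1"] by simp
  finally show ?thesis unfolding sum_wheel_cond_hub by (simp add: algebra_simps)
qed

lemma laplacian_mult_green:
  assumes i: "i \<in> {1..n+1}" and j: "j \<in> {1..n+1}"
  shows "matmul (n+1) L green i j = centering (n+1) i j"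
proof -
  note pos = a_pos N_pos
  consider "i \<in> {1..n}" "j \<in> {1..n}" | "i \<in> {1..n}" "j = n + 1"
    | "i = n + 1" "j \<in> {1..n}" | "i = n + 1" "j = n + 1"
    using i j by fastforce
  then show ?thesis
  proof cases
    case 1
    then have "green (n+1) j = hub_rim" by (simp add: green_def)
    then show ?thesis
      unfolding laplacian_mult_rim[OF 1(1)] by (simp only: laplacian_green_rim_rim[OF 1])
  next
    case 2
    then show ?thesis
      unfolding laplacian_mult_rim[OF 2(1)] using rim_succ_in rim_pred_in pos
      by (simp add: green_def hub_rim_def hub_hub_def centering_def real_n_eq
          field_simps power2_eq_square)
  next
    case 3
    then show ?thesis
      unfolding 3(1) laplacian_mult_hub green_rim_col_sum[OF 3(2)] using pos
      by (simp add: green_def hub_rim_def centering_def real_n_eq field_simps power2_eq_square)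
  next
    case 4
    then show ?thesis
      unfolding 4 laplacian_mult_hub using pos
      by (simp add: green_def hub_rim_def hub_hub_def centering_def real_n_eq
          field_simps power2_eq_square)
  qed
qed

lemma group_inverse_wheel: "group_inverse (n+1) L = green"
proof (rule group_inverse_eqI, rule is_group_inverse_if_centering)
  show "laplacian (n+1) w i j = laplacian (n+1) w j i" for i j
    by (rule laplacian_sym) (rule wheel_cond_sym)
  show "(\<Sum>k\<in>{1..n+1}. laplacian (n+1) w k j) = 0" if "j \<in> {1..n+1}" for j
    using that by (intro laplacian_col_sum wheel_cond_sym wheel_cond_diag)
qed (use green_sym green_col_sum laplacian_mult_green green_outside in auto)

lemma green_trace:
  "(\<Sum>i\<in>{1..n+1}. green i i) = real n * (rim_scale * cheb_U (n - 1) q + rim_shift) + hub_hub"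
proof -
  have "(\<Sum>i\<in>{1..n+1}. green i i) = (\<Sum>i\<in>{1..n}. green i i) + green (n+1) (n+1)"
    by (simp add: sum.cl_ivl_Suc)
  also have "(\<Sum>i\<in>{1..n}. green i i) = (\<Sum>i\<in>{1..n}. rim_scale * cheb_U (n - 1) q + rim_shift)"
    using n_ge_3 by (intro sum.cong) (auto simp: green_def idx_dist_def profile_def cheb_U_pred_def)
  finally show ?thesis by (simp add: green_def)
qed

lemma kirchhoff_index_wheel:
  "kirchhoff_index (n+1) w
     = real n * (real n + 1) * cheb_U (n - 1) q / (2 * c * (cheb_T n q - 1)) - real n / a"
proof -
  have "kirchhoff_index (n+1) w
      = real (n+1) * (real n * (rim_scale * cheb_U (n - 1) q + rim_shift) + hub_hub)"
    using kirchhoff_index_eq_trace[OF group_inverse_wheel green_col_sum] unfolding green_trace .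
  also have "\<dots> = (N - 1) * N * rim_scale * cheb_U (n - 1) q - (N - 1) / a"
    using a_pos N_pos
    by (simp add: real_n_eq rim_shift_def hub_hub_def field_simps power2_eq_square)
  finally show ?thesis by (simp add: rim_scale_def real_n_eq)
qed

end

lemma kirchhoff_closed_form_reduce:
  fixes c p T U V :: real and m :: nat
  assumes "c > 0" "p > 0" "T > 1" "V = T - p * U"
  shows "- (1 / (2 * c)) * ((real m + 1) / (T - 1)) *
        ((2 * c * p * real m / (6 * c) - real m + 1) * U
         + (2 * c / (2 * c * p) + real m / 3) * (V - 1))
     + 1 / (2 * c * p) + real m * (real m + 1) / (6 * c)
   = real m * (real m + 1) * U / (2 * c * (T - 1)) - real m / (2 * c * p)"
proof -
  have "T - 1 \<noteq> 0" using assms(3) by simp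
  then show ?thesis unfolding assms(4) using assms(1,2) by (simp add: field_simps)
qed

theorem corollary3p2:
  fixes n :: nat and a c q :: real
  assumes "n \<ge> 3" and "a > 0" and "c > 0"
    and "q = a / (2 * c) + 1"
  shows "kirchhoff_index (n + 1) (wheel_cond n a c) =
     - (1 / (2 * c)) * ((real n + 1) / (cheb_T n q - 1)) *
        ((a * real n / (6 * c) - real n + 1) * cheb_U (n - 1) q
         + (2 * c / a + real n / 3) * (cheb_V (n - 1) q - 1))
     + 1 / a + real n * (real n + 1) / (6 * c)"
proof -
  interpret wheel_network n a c q
    using assms by unfold_locales
  have "cheb_V (n - 1) q = cheb_T n q - (q - 1) * cheb_U (n - 1) q"
    using cheb_T_Suc_minus_cheb_V[of "n - 1" q] assms(1) by simp
  moreover have "a = 2 * c * (q - 1)"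
    using assms(3,4) by (simp add: field_simps)
  ultimately show ?thesis
    using kirchhoff_closed_form_reduce[of c "q - 1" "cheb_T n q"] kirchhoff_index_wheel
      q_gt_1 cheb_T_n_gt_1 assms(3) by simp
qed

end
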